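(* Let $K$ be a field of characteristic $0$, let $L=\mathcal{L}(x,y)$ be the free Lie algebra over $K$ freely generated by $x,y$, and let $\delta$ be the derivation of $L$ determined by $\delta(x)=0$, $\delta(y)=x$. Let $k\geq 0$ be an integer and $p\in L$, and put $f=[p,\delta^k(p)]$. Then $f$ is a $K$-linear combination of pseudodeterminants of degree $(k,0)$, i.e. of elements $U^{(k,0)}_{A,B}=[\delta^k(A),B]-[A,\delta^k(B)]$ with $A,B$ Hall monomials.
   Context: For Hall monomials $A,B$ of $L$ (elements of the Hall basis of $L$, built from basic words with respect to the degree-lexicographic order with $x<y$) and integers $m,k\geq 0$, the pseudodeterminant of degree $(m,k)$ is $U^{(m,k)}_{A,B}=[\delta^m(A),\delta^{k}(B)]-[\delta^{k}(A),\delta^m(B)]$. *)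

theory Defs
  imports "HOL-Library.Poly_Mapping"
begin

text \<open>Free associative algebra K<x,y> over the letters x = False, y = True
  (so x < y), realised as finitely supported functions from words to K.\<close>

type_synonym 'a nc = "bool list \<Rightarrow>\<^sub>0 'a"

definition nc_scale :: "'a::ring \<Rightarrow> 'a nc \<Rightarrow> 'a nc" where
  "nc_scale c p = Poly_Mapping.map (\<lambda>a. c * a) p"

definition nc_mult :: "'a::ring nc \<Rightarrow> 'a nc \<Rightarrow> 'a nc" where
  "nc_mult p q = (\<Sum>u\<in>Poly_Mapping.keys p. \<Sum>v\<in>Poly_Mapping.keys q.
      Poly_Mapping.single (u @ v) (Poly_Mapping.lookup p u * Poly_Mapping.lookup q v))"

definition lie :: "'a::ring nc \<Rightarrow> 'a nc \<Rightarrow> 'a nc" where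
  "lie p q = nc_mult p q - nc_mult q p"

inductive_set free_lie :: "'a::ring_1 nc set" where
  gen_x: "Poly_Mapping.single [False] 1 \<in> free_lie"
| gen_y: "Poly_Mapping.single [True] 1 \<in> free_lie"
| add: "p \<in> free_lie \<Longrightarrow> q \<in> free_lie \<Longrightarrow> p + q \<in> free_lie"
| scale: "p \<in> free_lie \<Longrightarrow> nc_scale c p \<in> free_lie"
| bracket: "p \<in> free_lie \<Longrightarrow> q \<in> free_lie \<Longrightarrow> lie p q \<in> free_lie"

text \<open>The derivation delta with delta(x) = 0, delta(y) = x: on a word it replaces
  one occurrence of y by x in all possible ways (Leibniz rule); extended linearly.\<close>
definition delta_word :: "bool list \<Rightarrow> 'a::ring_1 nc" where
  "delta_word w = (\<Sum>i\<in>{i. i < length w \<and> w ! i = True}.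
      Poly_Mapping.single (w[i := False]) 1)"

definition delta :: "'a::ring_1 nc \<Rightarrow> 'a nc" where
  "delta p = (\<Sum>w\<in>Poly_Mapping.keys p. nc_scale (Poly_Mapping.lookup p w) (delta_word w))"

definition lyndon :: "bool list \<Rightarrow> bool" where
  "lyndon w \<longleftrightarrow> w \<noteq> [] \<and>
     (\<forall>i. 0 < i \<and> i < length w \<longrightarrow> (w, drop i w) \<in> lexord {(a, b). a < b})"

definition std_split :: "bool list \<Rightarrow> nat" where
  "std_split w = (LEAST i. 0 < i \<and> i < length w \<and> lyndon (drop i w))"

lemma lyndon_single: "lyndon [a]"
  by (auto simp: lyndon_def)

lemma std_split_bounds:
  assumes "2 \<le> length w"
  shows "0 < std_split w \<and> std_split w < length w"
proof -
  have "lyndon (drop (length w - 1) w)"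
    using assms by (cases w rule: rev_cases) (auto simp: lyndon_single)
  hence ex: "0 < length w - 1 \<and> length w - 1 < length w \<and> lyndon (drop (length w - 1) w)"
    using assms by auto
  show ?thesis unfolding std_split_def using LeastI[of "\<lambda>i. 0 < i \<and> i < length w \<and> lyndon (drop i w)" "length w - 1", OF ex] by blast
qed

function hall_mono :: "bool list \<Rightarrow> 'a::ring_1 nc" where
  "hall_mono w = (if length w \<le> 1 then Poly_Mapping.single w 1
     else lie (hall_mono (take (std_split w) w)) (hall_mono (drop (std_split w) w)))"
  by auto
termination
proof (relation "measure length")
  fix w :: "bool list"
  assume "\<not> length w \<le> 1"
  then have "0 < std_split w \<and> std_split w < length w" by (intro std_split_bounds) simp
  then show "(take (std_split w) w, w) \<in> measure length"
    and "(drop (std_split w) w, w) \<in> measure length" by auto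
qed simp

definition hall_monomials :: "'a::ring_1 nc set" where
  "hall_monomials = {hall_mono w | w. lyndon w}"

definition pseudodet :: "nat \<Rightarrow> nat \<Rightarrow> 'a::ring_1 nc \<Rightarrow> 'a nc \<Rightarrow> 'a nc" where
  "pseudodet m k A B = lie ((delta ^^ m) A) ((delta ^^ k) B) - lie ((delta ^^ k) A) ((delta ^^ m) B)"

end

theory Submission
  imports Defs "HOL-Library.List_Lexorder" HOL.Modules
begin

text \<open>The Hall monomials \<open>H w\<close> of Lyndon words \<open>w\<close> span the free Lie algebra. It suffices to
  rewrite a bracket \<open>[H h, H k]\<close> with \<open>h < k\<close>: if \<open>h\<close> is a letter or its right standard factor
  is at least \<open>k\<close>, the bracket is the Hall monomial of the Lyndon word \<open>h k\<close>; otherwise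
  \<open>h = u v\<close> with \<open>v < k\<close> and the Jacobi identity
  \<open>[[H u, H v], H k] = [H u, [H v, H k]] - [H v, [H u, H k]]\<close> leads to brackets of smaller
  total length, or of equal total length whose larger word is smaller than \<open>k\<close>.

  Now write \<open>p = \<Sum> a\<^sub>A A\<close> over Hall monomials and let \<open>D = \<delta>\<^sup>k\<close>. By bilinearity,
  \<open>\<Sum> a\<^sub>A a\<^sub>B ([D A, B] - [A, D B]) = [D p, p] - [p, D p] = -2 [p, D p]\<close>, and dividing by \<open>-2\<close>
  expresses \<open>[p, D p]\<close> through pseudodeterminants of degree \<open>(k, 0)\<close>.\<close>

section \<open>The free associative algebra\<close>

text \<open>Concatenation as monoid addition on words makes \<open>'a nc\<close> the monoid algebra of the
  free monoid, so it inherits the ring structure of poly-mappings; \<open>nc_mult\<close> turns out to be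
  its multiplication.\<close>

instantiation list :: (type) monoid_add
begin
definition zero_list_def: "(0::'a list) = []"
definition plus_list_def: "(xs::'a list) + ys = xs @ ys"
instance by standard (simp_all add: zero_list_def plus_list_def)
end

lemma poly_mapping_sum_single:
  "p = (\<Sum>u\<in>Poly_Mapping.keys p. Poly_Mapping.single u (Poly_Mapping.lookup p u))"
  by (rule poly_mapping_eqI) (simp add: lookup_sum lookup_single when_def in_keys_iff)

lemma nc_mult_eq_times: "nc_mult p q = p * q"
proof -
  have "p * q = (\<Sum>u\<in>Poly_Mapping.keys p. Poly_Mapping.single u (Poly_Mapping.lookup p u)) *
     (\<Sum>v\<in>Poly_Mapping.keys q. Poly_Mapping.single v (Poly_Mapping.lookup q v))"
    using poly_mapping_sum_single[of p] poly_mapping_sum_single[of q] by simp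
  also have "\<dots> = nc_mult p q"
    unfolding nc_mult_def sum_product by (simp add: mult_single plus_list_def)
  finally show ?thesis by simp
qed

lemma lie_eq_commutator: "lie p q = p * q - q * p"
  by (simp add: lie_def nc_mult_eq_times)

lemma nc_scale_eq_times: "nc_scale c p = Poly_Mapping.single [] c * p"
  unfolding nc_scale_def mult_map_scale_conv_mult zero_list_def ..

lemma single_Nil_commute:
  "Poly_Mapping.single [] (c::'a::comm_ring_1) * p = p * Poly_Mapping.single [] c"
  by (subst (1 2) poly_mapping_sum_single[of p])
    (simp add: sum_distrib_left sum_distrib_right mult_single plus_list_def mult.commute)

lemma times_single_Nil_left_commute:
  "q * (Poly_Mapping.single [] (c::'a::comm_ring_1) * p) = Poly_Mapping.single [] c * (q * p)"
  by (metis mult.assoc single_Nil_commute)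

interpretation NC: module "nc_scale :: 'a::comm_ring_1 \<Rightarrow> 'a nc \<Rightarrow> 'a nc"
proof
  fix a b :: 'a and x y :: "'a nc"
  show "nc_scale a (x + y) = nc_scale a x + nc_scale a y"
    by (simp add: nc_scale_eq_times distrib_left)
  show "nc_scale (a + b) x = nc_scale a x + nc_scale b x"
    by (simp add: nc_scale_eq_times single_add distrib_right)
  show "nc_scale a (nc_scale b x) = nc_scale (a * b) x"
    by (simp add: nc_scale_eq_times mult.assoc[symmetric] mult_single plus_list_def)
  show "nc_scale 1 x = x"
    by (simp add: nc_scale_eq_times zero_list_def[symmetric])
qed

lemma lie_add_left: "lie (p + q) r = lie p r + lie q r"
  by (simp add: lie_eq_commutator algebra_simps)

lemma lie_add_right: "lie r (p + q) = lie r p + lie r q"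
  by (simp add: lie_eq_commutator algebra_simps)

lemma lie_zero_left [simp]: "lie 0 r = 0"
  by (simp add: lie_eq_commutator)

lemma lie_zero_right [simp]: "lie r 0 = 0"
  by (simp add: lie_eq_commutator)

lemma lie_self [simp]: "lie r r = 0"
  by (simp add: lie_eq_commutator)

lemma lie_antisym: "lie p q = - lie q p"
  by (simp add: lie_eq_commutator)

lemma lie_jacobi: "lie (lie a b) c = lie a (lie b c) - lie b (lie a c)"
  by (simp add: lie_eq_commutator algebra_simps)

lemma lie_scale_left: "lie (nc_scale (c::'a::comm_ring_1) p) q = nc_scale c (lie p q)"
  by (simp add: lie_eq_commutator nc_scale_eq_times times_single_Nil_left_commute
      right_diff_distrib mult.assoc)

lemma lie_scale_right: "lie q (nc_scale (c::'a::comm_ring_1) p) = nc_scale c (lie q p)"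
  by (simp add: lie_eq_commutator nc_scale_eq_times times_single_Nil_left_commute
      right_diff_distrib mult.assoc)

lemma lie_sum_left: "lie (\<Sum>i\<in>I. f i) q = (\<Sum>i\<in>I. lie (f i) q)"
  by (induct I rule: infinite_finite_induct) (simp_all add: lie_add_left)

lemma lie_sum_right: "lie q (\<Sum>i\<in>I. f i) = (\<Sum>i\<in>I. lie q (f i))"
  by (induct I rule: infinite_finite_induct) (simp_all add: lie_add_right)

lemma lie_sum_scale_sum_scale:
  "lie (\<Sum>i\<in>I. nc_scale (a i) (f i)) (\<Sum>j\<in>J. nc_scale (b j) (g j)) =
     (\<Sum>(i, j)\<in>I \<times> J. nc_scale (a i * b j :: 'a::comm_ring_1) (lie (f i) (g j)))"
  unfolding lie_sum_left
  by (simp add: lie_sum_right lie_scale_left lie_scale_right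
      NC.scale_sum_right mult.commute flip: sum.cartesian_product)

lemma lie_right_in_span:
  assumes "x \<in> NC.span G" "\<And>g. g \<in> G \<Longrightarrow> lie a g \<in> NC.span H"
  shows "lie a x \<in> NC.span H"
  using assms(1)
proof (induction rule: NC.span_induct_alt)
  case base then show ?case by (simp add: NC.span_zero)
next
  case (step c x y) then show ?case
    by (simp add: lie_add_right lie_scale_right NC.span_add NC.span_scale assms(2))
qed

lemma lie_left_in_span:
  assumes "x \<in> NC.span G" "\<And>g. g \<in> G \<Longrightarrow> lie g a \<in> NC.span H"
  shows "lie x a \<in> NC.span H"
  using assms(1)
proof (induction rule: NC.span_induct_alt)
  case base then show ?case by (simp add: NC.span_zero)
next
  case (step c x y) then show ?case
    by (simp add: lie_add_left lie_scale_left NC.span_add NC.span_scale assms(2))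
qed

lemma lookup_nc_scale: "Poly_Mapping.lookup (nc_scale c p) w = c * Poly_Mapping.lookup p w"
  by (simp add: nc_scale_def map.rep_eq when_def)

lemma delta_eq_sum_superset:
  fixes p :: "'a::comm_ring_1 nc"
  assumes "finite A" "Poly_Mapping.keys p \<subseteq> A"
  shows "delta p = (\<Sum>w\<in>A. nc_scale (Poly_Mapping.lookup p w) (delta_word w))"
  unfolding delta_def using assms by (intro sum.mono_neutral_left) (auto simp: in_keys_iff)

lemma module_hom_delta: "module_hom nc_scale nc_scale (delta :: 'a::comm_ring_1 nc \<Rightarrow> 'a nc)"
proof (unfold_locales)
  fix p q :: "'a nc" and c :: 'a
  let ?A = "Poly_Mapping.keys p \<union> Poly_Mapping.keys q"
  have "delta (p + q) = (\<Sum>w\<in>?A. nc_scale (Poly_Mapping.lookup (p + q) w) (delta_word w))"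
    using keys_add[of p q] by (intro delta_eq_sum_superset) auto
  also have "\<dots> = (\<Sum>w\<in>?A. nc_scale (Poly_Mapping.lookup p w) (delta_word w)) +
      (\<Sum>w\<in>?A. nc_scale (Poly_Mapping.lookup q w) (delta_word w))"
    by (simp add: lookup_add NC.scale_left_distrib sum.distrib)
  also have "\<dots> = delta p + delta q"
    by (subst (1 2) delta_eq_sum_superset[where A = ?A]) auto
  finally show "delta (p + q) = delta p + delta q" .
  have "delta (nc_scale c p) =
      (\<Sum>w\<in>Poly_Mapping.keys p. nc_scale (Poly_Mapping.lookup (nc_scale c p) w) (delta_word w))"
    by (intro delta_eq_sum_superset) (auto simp: in_keys_iff lookup_nc_scale)
  then show "delta (nc_scale c p) = nc_scale c (delta p)"
    by (simp add: lookup_nc_scale delta_def NC.scale_sum_right flip: NC.scale_scale)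
qed

lemma module_hom_delta_pow:
  "module_hom nc_scale nc_scale (delta ^^ k :: 'a::comm_ring_1 nc \<Rightarrow> 'a nc)"
  by (induction k)
    (auto simp only: funpow.simps intro: NC.module_hom_id module_hom_compose[OF _ module_hom_delta])

lemma lie_hom_image_eq_combination:
  fixes D :: "'a::field_char_0 nc \<Rightarrow> 'a nc"
  assumes D: "module_hom nc_scale nc_scale D" and p: "p \<in> NC.span H"
  shows "\<exists>S c. finite S \<and> S \<subseteq> H \<times> H \<and>
    lie p (D p) = (\<Sum>(A, B)\<in>S. nc_scale (c A B) (lie (D A) B - lie A (D B)))"
proof -
  interpret D: module_hom nc_scale nc_scale D by (rule D)
  obtain T a where T: "finite T" "T \<subseteq> H" and p_eq: "p = (\<Sum>t\<in>T. nc_scale (a t) t)"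
    using p unfolding NC.span_explicit by blast
  have Dp_eq: "D p = (\<Sum>t\<in>T. nc_scale (a t) (D t))"
    by (simp add: p_eq D.sum D.scale)
  have expansion: "lie (D p) p - lie p (D p) =
      (\<Sum>(A, B)\<in>T \<times> T. nc_scale (a A * a B) (lie (D A) B - lie A (D B)))"
    unfolding Dp_eq
    by (simp add: p_eq lie_sum_scale_sum_scale NC.scale_right_diff_distrib split_def sum_subtractf)
  have "lie (D p) p - lie p (D p) = nc_scale (- 2) (lie p (D p))"
    by (subst lie_antisym) (simp add: NC.scale_left_distrib[of "-1" "-1", simplified])
  then have "lie p (D p) = nc_scale (- 1 / 2) (lie (D p) p - lie p (D p))"
    by simp
  also have "\<dots> = (\<Sum>(A, B)\<in>T \<times> T. nc_scale (- (a A * a B) / 2) (lie (D A) B - lie A (D B)))"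
    by (simp add: expansion NC.scale_sum_right split_def)
  finally show ?thesis
    using T by (intro exI[of _ "T \<times> T"] exI[of _ "\<lambda>A B. - (a A * a B) / 2"]) auto
qed

section \<open>Lyndon words and the standard factorisation\<close>

lemma lyndon_iff: "lyndon w \<longleftrightarrow> w \<noteq> [] \<and> (\<forall>i. 0 < i \<and> i < length w \<longrightarrow> w < drop i w)"
  by (simp add: lyndon_def list_less_def)

lemma lyndon_length_ge_1: "lyndon w \<Longrightarrow> 1 \<le> length w"
  by (cases w) (auto simp: lyndon_def)

lemma less_append_self: "r \<noteq> [] \<Longrightarrow> (xs::'a::linorder list) < xs @ r"
  by (induct xs) (auto simp: neq_Nil_conv)

lemma append_less_append_iff: "(xs::'a::linorder list) @ a < xs @ b \<longleftrightarrow> a < b"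
  by (induct xs) auto

lemma take_less_self: "0 < i \<Longrightarrow> i < length w \<Longrightarrow> take i w < (w::'a::linorder list)"
  using less_append_self[of "drop i w" "take i w"] by simp

lemma list_less_cases:
  assumes "(xs::'a::linorder list) < ys"
  obtains r where "r \<noteq> []" "ys = xs @ r"
  | "\<And>a b. xs @ a < ys @ b"
  using assms
proof (induct xs arbitrary: ys)
  case Nil
  then show ?case by (cases ys) auto
next
  case (Cons x xs)
  then obtain y ys' where ys: "ys = y # ys'" by (cases ys) auto
  show ?case
  proof (cases "x < y")
    case True
    then show ?thesis using Cons.prems(2) ys by auto
  next
    case False
    then have "x = y" "xs < ys'" using Cons.prems(3) ys by auto
    then show ?thesis using Cons.hyps[of ys'] Cons.prems(1,2) ys by auto
  qed
qed

lemma wf_less_length_bounded: "wf {(u, v :: 'a::{linorder, finite} list). u < v \<and> length u < n}"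
proof (rule wf_finite_segments)
  show "irrefl {(u, v :: 'a list). u < v \<and> length u < n}"
    by (simp add: irrefl_def)
  show "trans {(u, v :: 'a list). u < v \<and> length u < n}"
    by (auto simp: trans_def intro: less_trans)
  show "finite {u. (u, v) \<in> {(u, v :: 'a list). u < v \<and> length u < n}}" for v
    using finite_lists_length_le[of "UNIV :: 'a set" n] by (rule finite_subset[rotated]) auto
qed

lemma lyndon_drop_std_split:
  assumes "2 \<le> length w"
  shows "lyndon (drop (std_split w) w)"
proof -
  have "lyndon (drop (length w - 1) w)"
    using assms by (cases w rule: rev_cases) (auto simp: lyndon_single)
  then show ?thesis
    using assms LeastI[of "\<lambda>i. 0 < i \<and> i < length w \<and> lyndon (drop i w)" "length w - 1"]
    by (simp add: std_split_def)
qed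

lemma std_split_le: "0 < j \<Longrightarrow> j < length w \<Longrightarrow> lyndon (drop j w) \<Longrightarrow> std_split w \<le> j"
  unfolding std_split_def by (rule Least_le) simp

lemma lyndon_drop_if_least_suffix:
  assumes "0 < j" "j < length w"
    and least: "\<And>i. 0 < i \<Longrightarrow> i < length w \<Longrightarrow> drop j w \<le> drop i w"
  shows "lyndon (drop j w)"
  unfolding lyndon_iff
proof (intro conjI allI impI)
  show "drop j w \<noteq> []" using assms by simp
  fix i assume i: "0 < i \<and> i < length (drop j w)"
  then have "drop j w \<le> drop i (drop j w)" and "length (drop i (drop j w)) < length (drop j w)"
    using assms by (auto intro: least)
  then show "drop j w < drop i (drop j w)"
    by (metis order_le_less less_irrefl)
qed

lemma drop_std_split_least:
  assumes "2 \<le> length w" "0 < j" "j < length w"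
  shows "drop (std_split w) w \<le> drop j w"
proof -
  define suffixes where "suffixes = (\<lambda>i. drop i w) ` {i. 0 < i \<and> i < length w}"
  have "finite suffixes" "suffixes \<noteq> {}"
    using assms by (auto simp: suffixes_def)
  then have "Min suffixes \<in> suffixes"
    and least: "\<And>i. 0 < i \<Longrightarrow> i < length w \<Longrightarrow> Min suffixes \<le> drop i w"
    by (auto simp: suffixes_def)
  then obtain j0 where j0: "0 < j0" "j0 < length w" "Min suffixes = drop j0 w"
    by (auto simp: suffixes_def)
  note least = least[unfolded j0(3)]
  have "std_split w \<le> j0"
    using j0 least by (intro std_split_le lyndon_drop_if_least_suffix)
  moreover have "\<not> std_split w < j0"
  proof
    assume "std_split w < j0"
    moreover have "lyndon (drop (std_split w) w)" and "0 < std_split w"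
      using lyndon_drop_std_split std_split_bounds assms(1) by auto
    ultimately have "drop (std_split w) w < drop (j0 - std_split w) (drop (std_split w) w)"
      using j0 unfolding lyndon_iff by (auto dest!: spec[of _ "j0 - std_split w"])
    also have "\<dots> = drop j0 w"
      using \<open>std_split w < j0\<close> by simp
    finally show False
      using least[of "std_split w"] \<open>std_split w < j0\<close> \<open>0 < std_split w\<close> j0(2) by simp
  qed
  ultimately show ?thesis
    using least assms(2,3) by simp
qed

lemma lyndon_take_std_split:
  assumes lyndon: "lyndon w" and len: "2 \<le> length w"
  shows "lyndon (take (std_split w) w)"
proof -
  define u v where "u = take (std_split w) w" and "v = drop (std_split w) w"
  have w: "w = u @ v" and "u \<noteq> []" "v \<noteq> []"
    using std_split_bounds[OF len] by (auto simp: u_def v_def)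
  have w_less: "w < drop j w" if "0 < j" "j < length w" for j
    using lyndon that unfolding lyndon_iff by auto
  show ?thesis
    unfolding u_def[symmetric] lyndon_iff
  proof (intro conjI allI impI)
    show "u \<noteq> []" by fact
    fix j assume j: "0 < j \<and> j < length u"
    then have shorter: "length (drop j u) < length u"
      by auto
    have suffix: "drop j w = drop j u @ v"
      using j by (simp add: w)
    have w_less_suffix: "w < drop j u @ v"
      using w_less[of j] j by (simp add: suffix w)
    show "u < drop j u"
    proof (rule ccontr)
      assume "\<not> u < drop j u"
      moreover have "u \<noteq> drop j u"
        using shorter by (metis less_irrefl)
      ultimately have "drop j u < u" by simp
      then show False
      proof (cases rule: list_less_cases)
        case (1 r)
        define u' where "u' = drop j u"
        have w': "w = u' @ r @ v"
          using 1 w unfolding u'_def by (metis append.assoc)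
        have "r @ v < v"
          using w_less_suffix unfolding w' u'_def[symmetric] by (simp add: append_less_append_iff)
        moreover have "v \<le> r @ v"
        proof -
          have "0 < length u'" "length u' < length w"
            using j \<open>v \<noteq> []\<close> by (auto simp: w u'_def)
          then have "v \<le> drop (length u') w"
            using drop_std_split_least[OF len] by (simp add: v_def)
          then show ?thesis
            by (simp add: w')
        qed
        ultimately show False by simp
      next
        case 2
        then have "drop j w < w"
          using suffix w by simp
        then show False
          using w_less_suffix suffix by simp
      qed
    qed
  qed
qed

lemma lyndon_append:
  assumes lh: "lyndon h" and lk: "lyndon k" and hk: "h < k"
  shows "lyndon (h @ k)" and "h @ k < k"
proof -
  have "h \<noteq> []"
    using lh by (simp add: lyndon_def)
  show less: "h @ k < k"
    using hk
  proof (cases rule: list_less_cases)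
    case (1 r)
    then have "k < r"
      using lk \<open>h \<noteq> []\<close> unfolding lyndon_iff by (auto dest!: spec[of _ "length h"])
    then show ?thesis
      using 1 by (simp add: append_less_append_iff)
  next
    case 2
    from 2[of k "[]"] show ?thesis by simp
  qed
  show "lyndon (h @ k)"
    unfolding lyndon_iff
  proof (intro conjI allI impI)
    show "h @ k \<noteq> []" using \<open>h \<noteq> []\<close> by simp
    fix i assume i: "0 < i \<and> i < length (h @ k)"
    consider "i < length h" | "i = length h" | "length h < i" by linarith
    then show "h @ k < drop i (h @ k)"
    proof cases
      case 1
      have "h < drop i h"
        using lh i 1 unfolding lyndon_iff by auto
      then show ?thesis
      proof (cases rule: list_less_cases)
        case (1 r)
        then have "length h \<le> length (drop i h)"
          by (metis le_add1 length_append)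
        then show ?thesis using i \<open>i < length h\<close> by simp
      next
        case 2
        then show ?thesis using \<open>i < length h\<close> by simp
      qed
    next
      case 2
      then show ?thesis using less by simp
    next
      case 3
      have "k < drop (i - length h) k"
        using lk i 3 unfolding lyndon_iff by auto
      then show ?thesis using 3 less by simp
    qed
  qed
qed

lemma not_lyndon_append:
  assumes "s \<noteq> []" "k \<noteq> []" "k \<le> s"
  shows "\<not> lyndon (s @ k)"
proof
  assume "lyndon (s @ k)"
  then have "s @ k < k"
    using assms unfolding lyndon_iff by (auto dest!: spec[of _ "length s"])
  moreover have "k < s @ k"
  proof (cases "k = s")
    case True
    then show ?thesis using assms less_append_self by blast
  next
    case False
    then have "k < s" using assms by simp
    then show ?thesis
    proof (cases rule: list_less_cases)
      case (1 r)
      then show ?thesis using less_append_self[of "r @ k" k] by simp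
    next
      case 2
      from 2[of "[]" k] show ?thesis by simp
    qed
  qed
  ultimately show False by simp
qed

text \<open>The hypothesis on \<open>(h, k)\<close> is Hall's condition; under it \<open>[H h, H k]\<close> is the Hall
  monomial of \<open>h @ k\<close>.\<close>

lemma std_split_append:
  assumes lh: "lyndon h" and lk: "lyndon k"
    and std: "length h = 1 \<or> k \<le> drop (std_split h) h"
  shows "std_split (h @ k) = length h"
  unfolding std_split_def
proof (rule Least_equality)
  show "0 < length h \<and> length h < length (h @ k) \<and> lyndon (drop (length h) (h @ k))"
    using lh lk by (auto simp: lyndon_def)
next
  fix i assume i: "0 < i \<and> i < length (h @ k) \<and> lyndon (drop i (h @ k))"
  show "length h \<le> i"
  proof (rule ccontr)
    assume "\<not> length h \<le> i"
    then have "i < length h" "2 \<le> length h"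
      using i by linarith+
    then have "k \<le> drop i h"
      using std drop_std_split_least[of h i] i by auto
    then have "\<not> lyndon (drop i h @ k)"
      using \<open>i < length h\<close> lk by (intro not_lyndon_append) (auto simp: lyndon_def)
    then show False using i \<open>i < length h\<close> by simp
  qed
qed

declare hall_mono.simps[simp del]

lemma hall_mono_std_split:
  "2 \<le> length w \<Longrightarrow>
    hall_mono w = lie (hall_mono (take (std_split w) w)) (hall_mono (drop (std_split w) w))"
  by (subst hall_mono.simps) simp

lemma hall_mono_single: "hall_mono [a] = Poly_Mapping.single [a] 1"
  by (subst hall_mono.simps) simp

section \<open>Hall monomials span the free Lie algebra\<close>

lemma lie_mem_subspace_wlog_less:
  fixes f :: "'b::linorder \<Rightarrow> 'a::comm_ring_1 nc"
  assumes V: "NC.subspace V" and "P a b" and sym: "\<And>a b. P a b \<Longrightarrow> P b a"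
    and less: "\<And>a b. P a b \<Longrightarrow> a < b \<Longrightarrow> lie (f a) (f b) \<in> V"
  shows "lie (f a) (f b) \<in> V"
proof -
  consider "a < b" | "a = b" | "b < a" by fastforce
  then show ?thesis
  proof cases
    case 3
    then have "- lie (f b) (f a) \<in> V"
      using V less sym \<open>P a b\<close> by (intro NC.subspace_neg) auto
    then show ?thesis by (subst lie_antisym) simp
  qed (use assms NC.subspace_0 in auto)
qed

definition hall_span :: "bool list \<Rightarrow> nat \<Rightarrow> 'a::comm_ring_1 nc set" where
  "hall_span k n = NC.span {hall_mono s | s. lyndon s \<and> s < k \<and> length s \<le> n}"

lemma hall_span_mono: "k \<le> k' \<Longrightarrow> n \<le> n' \<Longrightarrow> hall_span k n \<subseteq> hall_span k' n'"
  unfolding hall_span_def by (rule NC.span_mono) auto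

lemma lie_hall_mono_in_hall_span_step:
  fixes h k :: "bool list"
  defines "n \<equiv> length h + length k"
  assumes lh: "lyndon h" and lk: "lyndon k" and hk: "h < k"
    and shorter: "\<And>a b. lyndon a \<Longrightarrow> lyndon b \<Longrightarrow> a < b \<Longrightarrow> length a + length b < n \<Longrightarrow>
      lie (hall_mono a) (hall_mono b) \<in> (hall_span b (length a + length b) :: 'a::comm_ring_1 nc set)"
    and below: "\<And>a b. lyndon a \<Longrightarrow> lyndon b \<Longrightarrow> a < b \<Longrightarrow> b < k \<Longrightarrow> length a + length b \<le> n \<Longrightarrow>
      lie (hall_mono a) (hall_mono b) \<in> (hall_span k n :: 'a nc set)"
  shows "lie (hall_mono h) (hall_mono k) \<in> (hall_span k n :: 'a nc set)"
proof (cases "length h = 1 \<or> k \<le> drop (std_split h) h")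
  case True
  have "2 \<le> length (h @ k)"
    using lyndon_length_ge_1[OF lh] lyndon_length_ge_1[OF lk] by simp
  then have "hall_mono (h @ k) = (lie (hall_mono h) (hall_mono k) :: 'a nc)"
    using hall_mono_std_split[of "h @ k"] std_split_append[OF lh lk True] by simp
  moreover have "hall_mono (h @ k) \<in> (hall_span k n :: 'a nc set)"
    unfolding hall_span_def n_def using lyndon_append[OF lh lk hk]
    by (intro NC.span_base) auto
  ultimately show ?thesis by simp
next
  case False
  then have len: "2 \<le> length h" and vk: "drop (std_split h) h < k"
    using lyndon_length_ge_1[OF lh] by auto
  define u v where "u = take (std_split h) h" and "v = drop (std_split h) h"
  have lu: "lyndon u" and lv: "lyndon v"
    unfolding u_def v_def using lyndon_take_std_split[OF lh len] lyndon_drop_std_split[OF len] .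
  have "u < k" "v < k"
    using take_less_self[of "std_split h" h] std_split_bounds[OF len] hk vk
    by (auto simp: u_def v_def)
  have length_uv: "length u + length v = length h"
    using std_split_bounds[OF len] by (simp add: u_def v_def)
  have below_any: "lie (hall_mono a) (hall_mono b) \<in> (hall_span k n :: 'a nc set)"
    if "lyndon a" "lyndon b" "a < k" "b < k" "length a + length b \<le> n" for a b
    using lie_mem_subspace_wlog_less[where f = hall_mono and a = a and b = b and
        P = "\<lambda>a b. lyndon a \<and> lyndon b \<and> a < k \<and> b < k \<and> length a + length b \<le> n"]
      below that unfolding hall_span_def by (auto simp: add.commute)
  have nested: "lie (hall_mono a) (lie (hall_mono b) (hall_mono k)) \<in> (hall_span k n :: 'a nc set)"
    if "lyndon a" "lyndon b" "a < k" "b < k" "length a + length b = length h" for a b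
  proof -
    have "lie (hall_mono b) (hall_mono k) \<in> (hall_span k (length b + length k) :: 'a nc set)"
      using shorter[of b k] lyndon_length_ge_1[of a] that lk by (simp add: n_def)
    then show ?thesis
      unfolding hall_span_def
    proof (rule lie_right_in_span)
      fix g :: "'a nc"
      assume "g \<in> {hall_mono s | s. lyndon s \<and> s < k \<and> length s \<le> length b + length k}"
      then obtain t where "g = hall_mono t" "lyndon t" "t < k" "length t \<le> length b + length k"
        by auto
      then show "lie (hall_mono a) g \<in> NC.span {hall_mono s | s. lyndon s \<and> s < k \<and> length s \<le> n}"
        using below_any[of a t] that unfolding hall_span_def n_def by simp
    qed
  qed
  have "lie (hall_mono h) (hall_mono k) =
      lie (hall_mono u) (lie (hall_mono v) (hall_mono k)) -
      (lie (hall_mono v) (lie (hall_mono u) (hall_mono k)) :: 'a nc)"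
    unfolding hall_mono_std_split[OF len] u_def[symmetric] v_def[symmetric] by (rule lie_jacobi)
  then show ?thesis
    using nested[of u v] nested[of v u] lu lv \<open>u < k\<close> \<open>v < k\<close> length_uv
    unfolding hall_span_def by (simp add: NC.span_diff)
qed

text \<open>The induction is on the total length and, for fixed total length, downwards on
  the larger word \<open>k\<close>; the latter terminates because only finitely many words below \<open>k\<close>
  are shorter than the total length.\<close>

lemma lie_hall_mono_in_hall_span:
  assumes "lyndon h" "lyndon k" "h < k"
  shows "lie (hall_mono h) (hall_mono k)
    \<in> (hall_span k (length h + length k) :: 'a::comm_ring_1 nc set)"
proof -
  have "\<forall>h. lyndon h \<longrightarrow> lyndon k \<longrightarrow> h < k \<longrightarrow> length h + length k = n \<longrightarrow>
      lie (hall_mono h) (hall_mono k) \<in> (hall_span k n :: 'a nc set)" for n k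
  proof (induction n arbitrary: k rule: less_induct)
    case (less n)
    note shorter = less.IH
    show ?case
    proof (induction k rule: wf_induct_rule[OF wf_less_length_bounded[of n]])
      case (1 k)
      note smaller_k = "1"
      show ?case
      proof (intro allI impI)
        fix h assume lh: "lyndon h" and lk: "lyndon k" and hk: "h < k"
          and n: "length h + length k = n"
        show "lie (hall_mono h) (hall_mono k) \<in> (hall_span k n :: 'a nc set)"
          unfolding n[symmetric]
        proof (rule lie_hall_mono_in_hall_span_step[OF lh lk hk])
          fix a b assume ab: "lyndon a" "lyndon b" "a < b"
          show "lie (hall_mono a) (hall_mono b) \<in> (hall_span b (length a + length b) :: 'a nc set)"
            if "length a + length b < length h + length k"
            using shorter[of "length a + length b" b] ab that n by simp
          assume "b < k" "length a + length b \<le> length h + length k"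
          then consider "length a + length b < n" | "length a + length b = n" "length b < n"
            using n lyndon_length_ge_1[OF \<open>lyndon a\<close>] by linarith
          then have "lie (hall_mono a) (hall_mono b) \<in> (hall_span b (length a + length b) :: 'a nc set)"
            by cases (use shorter[of "length a + length b" b] smaller_k[of b] ab \<open>b < k\<close> in simp_all)
          also have "\<dots> \<subseteq> hall_span k (length h + length k)"
            using \<open>b < k\<close> \<open>length a + length b \<le> length h + length k\<close>
            by (intro hall_span_mono) auto
          finally show "lie (hall_mono a) (hall_mono b)
            \<in> (hall_span k (length h + length k) :: 'a nc set)" .
        qed
      qed
    qed
  qed
  then show ?thesis using assms by blast
qed

lemma hall_span_subset_span_hall_monomials: "hall_span k n \<subseteq> NC.span hall_monomials"
  unfolding hall_span_def hall_monomials_def by (rule NC.span_mono) auto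

lemma lie_hall_mono_in_span_hall_monomials:
  assumes "lyndon u" "lyndon v"
  shows "lie (hall_mono u) (hall_mono v) \<in> NC.span (hall_monomials :: 'a::comm_ring_1 nc set)"
proof (rule lie_mem_subspace_wlog_less[where f = hall_mono and P = "\<lambda>u v. lyndon u \<and> lyndon v"])
  fix a b assume "lyndon a \<and> lyndon b" "a < b"
  then have "lie (hall_mono a) (hall_mono b) \<in> (hall_span b (length a + length b) :: 'a nc set)"
    by (simp add: lie_hall_mono_in_hall_span)
  with hall_span_subset_span_hall_monomials
  show "lie (hall_mono a) (hall_mono b) \<in> NC.span (hall_monomials :: 'a nc set)" ..
qed (use assms in auto)

lemma single_in_hall_monomials: "Poly_Mapping.single [a] 1 \<in> hall_monomials"
  unfolding hall_monomials_def
  by (intro CollectI exI[of _ "[a]"]) (simp add: hall_mono_single lyndon_single)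

lemma free_lie_subset_span_hall_monomials:
  "free_lie \<subseteq> NC.span (hall_monomials :: 'a::comm_ring_1 nc set)"
proof
  fix p :: "'a nc" assume "p \<in> free_lie"
  then show "p \<in> NC.span hall_monomials"
  proof (induction rule: free_lie.induct)
    case (bracket p q)
    show ?case using bracket.IH(1)
    proof (rule lie_left_in_span)
      fix g assume "g \<in> (hall_monomials :: 'a nc set)"
      then obtain u where u: "g = hall_mono u" "lyndon u"
        unfolding hall_monomials_def by auto
      show "lie g q \<in> NC.span hall_monomials"
        using bracket.IH(2)
      proof (rule lie_right_in_span)
        fix g' assume "g' \<in> (hall_monomials :: 'a nc set)"
        then obtain v where "g' = hall_mono v" "lyndon v"
          unfolding hall_monomials_def by auto
        then show "lie g g' \<in> NC.span hall_monomials"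
          using lie_hall_mono_in_span_hall_monomials u by simp
      qed
    qed
  qed (auto intro: NC.span_base NC.span_add NC.span_scale single_in_hall_monomials)
qed

theorem proposition3p4:
  fixes p :: "'a::field_char_0 nc" and k :: nat
  assumes "p \<in> free_lie"
  shows "\<exists>S c. finite S \<and> S \<subseteq> hall_monomials \<times> hall_monomials \<and>
    lie p ((delta ^^ k) p) = (\<Sum>(A, B)\<in>S. nc_scale (c A B) (pseudodet k 0 A B))"
proof -
  have "p \<in> NC.span hall_monomials"
    using assms free_lie_subset_span_hall_monomials by blast
  then show ?thesis
    using lie_hom_image_eq_combination[OF module_hom_delta_pow]
    by (simp add: pseudodet_def)
qed

end
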